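(* Let $\mathcal{H}$ be a Hilbert space, $H$ self-adjoint on $\mathcal{H}$, and $u:\mathbb{R}^+\to\mathcal{H}$ with $\sup_{t\ge0}\|u(t)\|<\infty$ and $u\in C^1(\mathbb{R}^+,\mathcal{H})\cap C^0(\mathbb{R}^+,{\rm Dom}\,H)$; set $r(t)=\partial_tu(t)+iHu(t)$. Let $t\mapsto M(t)\in B(\mathcal{H})$ have a bounded Heisenberg derivative $\mathcal{D}M(t)$ and suppose: (i) $\|M(\cdot)r(\cdot)\|\in L^1(\mathbb{R}^+,dt)$; (ii) $|(u_1|\mathcal{D}M(t)u(t))|\le\|B_1(t)u_1\|\,\|B(t)u(t)\|$ for all $u_1\in\mathcal{H}$, with $B(t),B_1(t)\in B(\mathcal{H})$; (iii) $\int_{\mathbb{R}^+}\|B(t)u(t)\|^2dt<\infty$ and $\int_{\mathbb{R}^+}\|B_1(t)e^{-itH}u_1\|^2dt\le C\|u_1\|^2$ for all $u_1\in\mathcal{H}$. Then $\lim_{t\to+\infty}e^{itH}M(t)u(t)$ exists.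
   Context: The Heisenberg derivative is $\mathcal{D}M(t)=\partial_tM(t)+[H,iM(t)]$, where $[H,iM(t)]$, defined as a quadratic form on ${\rm Dom}\,H$, is assumed to extend to a bounded operator. *)

theory Defs
  imports "HOL-Analysis.Analysis"
begin

class complex_vector = real_vector +
  fixes scaleC :: "complex \<Rightarrow> 'a \<Rightarrow> 'a"  (infixr \<open>*\<^sub>C\<close> 75)
  assumes scaleR_scaleC: "scaleR r x = scaleC (complex_of_real r) x"
    and scaleC_add_right: "a *\<^sub>C (x + y) = a *\<^sub>C x + a *\<^sub>C y"
    and scaleC_add_left: "(a + b) *\<^sub>C x = a *\<^sub>C x + b *\<^sub>C x"
    and scaleC_scaleC: "a *\<^sub>C (b *\<^sub>C x) = (a * b) *\<^sub>C x"
    and scaleC_one: "1 *\<^sub>C x = x"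

class complex_normed_vector = complex_vector + real_normed_vector +
  assumes norm_scaleC: "norm (a *\<^sub>C x) = cmod a * norm x"

text \<open>Inner product, conjugate-linear in the first and linear in the second argument
  (physics convention, written (x|y) in the paper).\<close>
class complex_inner = complex_normed_vector +
  fixes cinner :: "'a \<Rightarrow> 'a \<Rightarrow> complex"
  assumes cinner_cnj_commute: "cinner x y = cnj (cinner y x)"
    and cinner_add_left: "cinner (x + y) z = cinner x z + cinner y z"
    and cinner_scaleC_left: "cinner (a *\<^sub>C x) y = cnj a * cinner x y"
    and cinner_nonneg: "0 \<le> Re (cinner x x)"
    and cinner_eq_zero_iff: "cinner x x = 0 \<longleftrightarrow> x = 0"
    and norm_eq_sqrt_cinner: "norm x = sqrt (Re (cinner x x))"

text \<open>A complex Hilbert space is a type of class \<open>{complex_inner, complete_space}\<close>.\<close>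

definition cbounded_linear :: "('a::complex_normed_vector \<Rightarrow> 'b::complex_normed_vector) \<Rightarrow> bool" where
  "cbounded_linear f \<longleftrightarrow>
     (\<forall>x y. f (x + y) = f x + f y) \<and> (\<forall>c x. f (c *\<^sub>C x) = c *\<^sub>C f x) \<and>
     (\<exists>K. \<forall>x. norm (f x) \<le> norm x * K)"

definition csubspace :: "'a::complex_vector set \<Rightarrow> bool" where
  "csubspace D \<longleftrightarrow> 0 \<in> D \<and> (\<forall>x\<in>D. \<forall>y\<in>D. x + y \<in> D) \<and> (\<forall>c. \<forall>x\<in>D. c *\<^sub>C x \<in> D)"

definition adjoint_domain :: "'a::complex_inner set \<Rightarrow> ('a \<Rightarrow> 'a) \<Rightarrow> 'a set" where
  "adjoint_domain D H = {y. \<exists>z. \<forall>x\<in>D. cinner (H x) y = cinner x z}"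

text \<open>(Possibly unbounded) self-adjoint operator \<open>H\<close> with domain \<open>D\<close>:
  densely defined, linear, symmetric, and \<open>Dom H\<^sup>* \<subseteq> Dom H\<close> (hence \<open>H = H\<^sup>*\<close>).
  Values of \<open>H\<close> outside \<open>D\<close> are irrelevant.\<close>
definition self_adjoint :: "'a::complex_inner set \<Rightarrow> ('a \<Rightarrow> 'a) \<Rightarrow> bool" where
  "self_adjoint D H \<longleftrightarrow>
     csubspace D \<and> closure D = UNIV \<and>
     (\<forall>x\<in>D. \<forall>y\<in>D. H (x + y) = H x + H y) \<and> (\<forall>c. \<forall>x\<in>D. H (c *\<^sub>C x) = c *\<^sub>C H x) \<and>
     (\<forall>x\<in>D. \<forall>y\<in>D. cinner (H x) y = cinner x (H y)) \<and>
     adjoint_domain D H \<subseteq> D"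

text \<open>\<open>U t = e\<^sup>-\<^sup>i\<^sup>t\<^sup>H\<close>: the strongly continuous unitary group whose generator is \<open>-iH\<close>
  (exists and is unique by Stone's theorem when \<open>H\<close> is self-adjoint).\<close>
definition unitary_group_of :: "'a::complex_inner set \<Rightarrow> ('a \<Rightarrow> 'a) \<Rightarrow> (real \<Rightarrow> 'a \<Rightarrow> 'a) \<Rightarrow> bool" where
  "unitary_group_of D H U \<longleftrightarrow>
     (\<forall>t. cbounded_linear (U t) \<and> surj (U t) \<and> (\<forall>x y. cinner (U t x) (U t y) = cinner x y)) \<and>
     U 0 = id \<and> (\<forall>s t. U (s + t) = U s \<circ> U t) \<and>
     (\<forall>x. continuous_on UNIV (\<lambda>t. U t x)) \<and>
     (\<forall>x. x \<in> D \<longleftrightarrow> (\<exists>y. ((\<lambda>t. U t x) has_vector_derivative y) (at 0))) \<and>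
     (\<forall>x\<in>D. ((\<lambda>t. U t x) has_vector_derivative (- \<i>) *\<^sub>C H x) (at 0))"

end

theory Submission
  imports Defs
begin

text \<open>Let \<open>F t = e\<^sup>i\<^sup>t\<^sup>H M t (u t)\<close>. For \<open>\<phi>\<close> in the dense domain of \<open>H\<close>, the weak form of the
  Heisenberg derivative gives
  \<open>d/dt (\<phi> | F t) = (e\<^sup>-\<^sup>i\<^sup>t\<^sup>H \<phi> | DM t (u t)) + (e\<^sup>-\<^sup>i\<^sup>t\<^sup>H \<phi> | M t (r t))\<close>.
  Integrating over \<open>[T\<^sub>1, T\<^sub>2]\<close>, bounding the first term by (ii) and \<open>ab \<le> \<lambda>a\<^sup>2/2 + b\<^sup>2/(2\<lambda>)\<close>,
  and using (iii) and (i), one gets for every \<open>\<lambda> > 0\<close>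
  \<open>|(\<phi> | F T\<^sub>2 - F T\<^sub>1)| \<le> \<lambda>C\<parallel>\<phi>\<parallel>\<^sup>2/2 + (2\<lambda>)\<^sup>-\<^sup>1\<integral>\<^bsub>T\<^sub>1\<^esub>\<^bsup>T\<^sub>2\<^esup> \<parallel>B u\<parallel>\<^sup>2 + \<parallel>\<phi>\<parallel> \<integral>\<^bsub>T\<^sub>1\<^esub>\<^bsup>T\<^sub>2\<^esup> \<parallel>M r\<parallel>\<close>.
  Choosing \<open>\<lambda>\<close> small and then \<open>T\<^sub>1\<close> large makes the right-hand side uniformly small for
  \<open>\<parallel>\<phi>\<parallel> \<le> 2\<close>, and density turns this into the Cauchy property of \<open>F\<close> at infinity.\<close>

lemma cinner_add_right: "cinner x (y + z) = cinner x y + cinner x z"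
  by (metis cinner_add_left cinner_cnj_commute complex_cnj_add)

lemma cinner_scaleC_right: "cinner x (a *\<^sub>C y) = a * cinner x y"
  by (metis cinner_cnj_commute cinner_scaleC_left complex_cnj_cnj complex_cnj_mult)

lemma cinner_zero_left [simp]: "cinner 0 y = 0"
  using cinner_add_left[of 0 0 y] by simp

lemma cinner_zero_right [simp]: "cinner x 0 = 0"
  using cinner_add_right[of x 0 0] by simp

lemma cinner_minus_left: "cinner (- x) y = - cinner x y"
  using cinner_add_left[of x "- x" y] by (simp add: add_eq_0_iff)

lemma cinner_minus_right: "cinner x (- y) = - cinner x y"
  using cinner_add_right[of x y "- y"] by (simp add: add_eq_0_iff)

lemma cinner_diff_left: "cinner (x - y) z = cinner x z - cinner y z"
  by (simp only: diff_conv_add_uminus cinner_add_left cinner_minus_left)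

lemma cinner_diff_right: "cinner x (y - z) = cinner x y - cinner x z"
  by (simp only: diff_conv_add_uminus cinner_add_right cinner_minus_right)

lemma cinner_scaleR_left: "cinner (r *\<^sub>R x) y = r *\<^sub>R cinner x y"
  by (simp add: scaleR_scaleC cinner_scaleC_left scaleR_conv_of_real)

lemma cinner_scaleR_right: "cinner x (r *\<^sub>R y) = r *\<^sub>R cinner x y"
  by (simp add: scaleR_scaleC cinner_scaleC_right scaleR_conv_of_real)

lemma cinner_self: "cinner x x = complex_of_real ((norm x)\<^sup>2)"
proof -
  have "Im (cinner x x) = 0"
    using arg_cong[OF cinner_cnj_commute[of x x], of Im] by simp
  moreover have "Re (cinner x x) = (norm x)\<^sup>2"
    using norm_eq_sqrt_cinner[of x] cinner_nonneg[of x] by simp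
  ultimately show ?thesis by (simp add: complex_eq_iff)
qed

lemma cinner_cauchy_schwarz: "cmod (cinner x y) \<le> norm x * norm y"
proof (cases "x = 0")
  case False
  then have nx: "norm x > 0" by simp
  define c where "c = cinner x y / cinner x x"
  define z where "z = y - c *\<^sub>C x"
  have "cinner x x \<noteq> 0" using False cinner_eq_zero_iff by blast
  then have xz: "cinner x z = 0"
    unfolding z_def c_def by (simp add: cinner_diff_right cinner_scaleC_right)
  then have zx: "cinner z x = 0"
    using cinner_cnj_commute[of z x] by simp
  have "y = z + c *\<^sub>C x" unfolding z_def by simp
  then have "cinner y y = cinner z z + cnj c * c * cinner x x"
    by (simp add: cinner_add_left cinner_add_right cinner_scaleC_left cinner_scaleC_right xz zx)
  moreover have "cnj c * c = complex_of_real ((cmod c)\<^sup>2)"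
    by (simp add: complex_norm_square[symmetric] mult.commute)
  ultimately have "complex_of_real ((norm y)\<^sup>2) = complex_of_real ((norm z)\<^sup>2 + (cmod c)\<^sup>2 * (norm x)\<^sup>2)"
    by (simp add: cinner_self)
  then have "(norm y)\<^sup>2 = (norm z)\<^sup>2 + (cmod c)\<^sup>2 * (norm x)\<^sup>2"
    using of_real_eq_iff by blast
  then have "(cmod c)\<^sup>2 * (norm x)\<^sup>2 \<le> (norm y)\<^sup>2" by simp
  moreover have "cmod c = cmod (cinner x y) / (norm x)\<^sup>2"
    unfolding c_def by (simp add: cinner_self norm_divide norm_power)
  ultimately have "(cmod (cinner x y))\<^sup>2 / (norm x)\<^sup>2 \<le> (norm y)\<^sup>2"
    using nx by (simp add: power_divide field_simps power2_eq_square)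
  then have "(cmod (cinner x y))\<^sup>2 \<le> (norm x * norm y)\<^sup>2"
    using nx by (simp add: field_simps power_mult_distrib)
  then show ?thesis
    by (meson norm_ge_zero power2_le_imp_le zero_le_mult_iff)
qed simp

lemma bounded_bilinear_cinner:
  "bounded_bilinear (cinner :: 'a::complex_inner \<Rightarrow> 'a \<Rightarrow> complex)"
proof
  show "\<exists>K. \<forall>a b. norm (cinner a b) \<le> norm (a::'a) * norm b * K"
    by (rule exI[of _ 1]) (simp add: cinner_cauchy_schwarz)
qed (simp_all add: cinner_add_left cinner_add_right cinner_scaleR_left cinner_scaleR_right)

lemma cbounded_linear_imp_bounded_linear:
  assumes "cbounded_linear f"
  shows "bounded_linear f"
proof -
  from assms obtain K where add: "\<And>x y. f (x + y) = f x + f y"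
    and scale: "\<And>c x. f (c *\<^sub>C x) = c *\<^sub>C f x" and bound: "\<And>x. norm (f x) \<le> norm x * K"
    unfolding cbounded_linear_def by blast
  show ?thesis
    by (rule bounded_linear_intro[where K=K]) (auto simp: add scale bound scaleR_scaleC)
qed

lemma norm_le_if_cinner_bounded_on_dense:
  fixes x :: "'a::complex_inner"
  assumes dense: "closure D = UNIV"
    and bound: "\<And>\<phi>. \<phi> \<in> D \<Longrightarrow> norm \<phi> \<le> 2 \<Longrightarrow> cmod (cinner \<phi> x) \<le> K"
  shows "norm x \<le> 2 * K"
proof -
  define e where "e = (if x = 0 then 0 else (1 / norm x) *\<^sub>R x)"
  have ne: "norm e \<le> 1"
    by (simp add: e_def)
  have ex: "cmod (cinner e x) = norm x"
  proof (cases "x = 0")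
    case False
    then have "cinner e x = complex_of_real (norm x)"
      by (simp add: e_def cinner_scaleR_left cinner_self scaleR_conv_of_real power2_eq_square)
    then show ?thesis by simp
  qed (simp add: e_def)
  obtain \<phi> where \<phi>: "\<phi> \<in> D" "dist \<phi> e < 1/2"
    using dense closure_approachable[of e D] by (metis UNIV_I half_gt_zero_iff zero_less_one)
  then have "norm \<phi> \<le> 2"
    using ne norm_triangle_sub[of \<phi> e] by (simp add: dist_norm)
  then have "cmod (cinner \<phi> x) \<le> K" using bound \<phi> by blast
  have "cinner e x = cinner \<phi> x + cinner (e - \<phi>) x" by (simp add: cinner_diff_left)
  then have "cmod (cinner e x) \<le> cmod (cinner \<phi> x) + cmod (cinner (e - \<phi>) x)"
    by (metis norm_triangle_ineq)
  also have "cmod (cinner (e - \<phi>) x) \<le> norm (e - \<phi>) * norm x" by (rule cinner_cauchy_schwarz)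
  also have "\<dots> \<le> 1/2 * norm x"
    using \<phi>(2) by (intro mult_right_mono) (auto simp: dist_norm norm_minus_commute)
  finally show ?thesis using ex \<open>cmod (cinner \<phi> x) \<le> K\<close> by linarith
qed

context
  fixes D :: "'a::complex_inner set" and H :: "'a \<Rightarrow> 'a" and U :: "real \<Rightarrow> 'a \<Rightarrow> 'a"
  assumes U_grp: "unitary_group_of D H U"
begin

lemma unitary_group_of_bounded_linear: "bounded_linear (U t)"
  using U_grp cbounded_linear_imp_bounded_linear unfolding unitary_group_of_def by blast

lemma unitary_group_of_add: "U (s + t) x = U s (U t x)"
  using U_grp unfolding unitary_group_of_def by simp

lemma unitary_group_of_zero: "U 0 x = x"
  using U_grp unfolding unitary_group_of_def by simp

lemma unitary_group_of_norm: "norm (U t x) = norm x"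
  using U_grp unfolding unitary_group_of_def by (simp add: norm_eq_sqrt_cinner)

lemma unitary_group_of_inverse: "U t (U (- t) x) = x"
  using unitary_group_of_add[of t "- t"] by (simp add: unitary_group_of_zero)

lemma unitary_group_of_adjoint: "cinner (U t x) y = cinner x (U (- t) y)"
proof -
  have "cinner (U t x) (U t (U (- t) y)) = cinner x (U (- t) y)"
    using U_grp unfolding unitary_group_of_def by blast
  then show ?thesis by (simp add: unitary_group_of_inverse)
qed

lemma unitary_group_of_domain:
  assumes "x \<in> D"
  shows "U t x \<in> D"
proof -
  have "((\<lambda>s. U s x) has_vector_derivative (- \<i>) *\<^sub>C H x) (at 0)"
    using U_grp assms unfolding unitary_group_of_def by blast
  then have "((\<lambda>s. U t (U s x)) has_vector_derivative U t ((- \<i>) *\<^sub>C H x)) (at 0)"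
    by (rule bounded_linear.has_vector_derivative[OF unitary_group_of_bounded_linear])
  moreover have "U t (U s x) = U s (U t x)" for s
    by (metis add.commute unitary_group_of_add)
  ultimately have "\<exists>y. ((\<lambda>s. U s (U t x)) has_vector_derivative y) (at 0)"
    by auto
  then show ?thesis
    using U_grp unfolding unitary_group_of_def by blast
qed

lemma unitary_group_of_has_vector_derivative:
  assumes "x \<in> D"
  shows "((\<lambda>s. U s x) has_vector_derivative (- \<i>) *\<^sub>C H (U t x)) (at t)"
proof -
  have "((\<lambda>h. U h (U t x)) has_vector_derivative (- \<i>) *\<^sub>C H (U t x)) (at (t - t))"
    using U_grp unitary_group_of_domain[OF assms] unfolding unitary_group_of_def by simp
  moreover have "((\<lambda>s. s - t) has_vector_derivative 1) (at t)"
    by (auto intro!: derivative_eq_intros simp flip: has_real_derivative_iff_has_vector_derivative)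
  ultimately have "((\<lambda>s. U (s - t) (U t x)) has_vector_derivative (- \<i>) *\<^sub>C H (U t x)) (at t)"
    using vector_diff_chain_at[of "\<lambda>s. s - t" 1 t "\<lambda>h. U h (U t x)"] by (simp add: o_def)
  then show ?thesis
    by (simp add: unitary_group_of_add[symmetric])
qed

end

lemma Baire_closed_cover_contains_ball:
  fixes E :: "nat \<Rightarrow> 'a::complete_space set"
  assumes closed: "\<And>n. closed (E n)" and cover: "\<Union>(range E) = UNIV"
  shows "\<exists>n x r. r > 0 \<and> ball x r \<subseteq> E n"
proof -
  have "\<exists>n. interior (E n) \<noteq> {}"
  proof (rule ccontr)
    assume "\<not> ?thesis"
    then have "euclidean interior_of \<Union>(range E) = {}"
      by (intro Baire_category_alt)
        (auto simp: completely_metrizable_space_euclidean closed closed_closedin[symmetric])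
    then show False using cover by simp
  qed
  then show ?thesis
    by (meson equals0I mem_interior)
qed

lemma banach_steinhaus:
  fixes T :: "'i \<Rightarrow> 'a::{real_normed_vector,complete_space} \<Rightarrow> 'b::real_normed_vector"
  assumes lin: "\<And>i. i \<in> I \<Longrightarrow> bounded_linear (T i)"
    and pointwise: "\<And>x. \<exists>c. \<forall>i\<in>I. norm (T i x) \<le> c"
  shows "\<exists>K. \<forall>i\<in>I. \<forall>x. norm (T i x) \<le> K * norm x"
proof -
  define E where "E n = {x. \<forall>i\<in>I. norm (T i x) \<le> real n}" for n :: nat
  have closed_E: "closed (E n)" for n
  proof -
    have "E n = (\<Inter>i\<in>I. {x. norm (T i x) \<le> real n})" unfolding E_def by auto
    moreover have "closed {x. norm (T i x) \<le> real n}" if "i \<in> I" for i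
      using lin[OF that]
      by (intro closed_Collect_le continuous_intros) (auto intro: linear_continuous_on)
    ultimately show ?thesis by (auto intro: closed_INT)
  qed
  have "x \<in> \<Union>(range E)" for x
  proof -
    obtain c where "\<forall>i\<in>I. norm (T i x) \<le> c" using pointwise by blast
    then have "x \<in> E (nat \<lceil>c\<rceil>)"
      unfolding E_def by (auto intro: order_trans[OF _ real_nat_ceiling_ge])
    then show ?thesis by blast
  qed
  then have cover: "\<Union>(range E) = UNIV" by blast
  obtain n x0 r where r: "r > 0" "ball x0 r \<subseteq> E n"
    using Baire_closed_cover_contains_ball[OF closed_E cover] by blast
  then have x0: "x0 \<in> E n" by auto
  show ?thesis
  proof (intro exI[of _ "4 * real n / r"] ballI allI)
    fix i x assume i: "i \<in> I"
    interpret L: bounded_linear "T i" by (rule lin[OF i])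
    show "norm (T i x) \<le> 4 * real n / r * norm x"
    proof (cases "x = 0")
      case False
      define a where "a = r / (2 * norm x)"
      have a: "a > 0" "norm (a *\<^sub>R x) < r" using False r by (simp_all add: a_def)
      then have "x0 + a *\<^sub>R x \<in> E n" using r by (auto simp: dist_norm intro!: subsetD[OF r(2)])
      then have "norm (T i (x0 + a *\<^sub>R x)) \<le> real n" "norm (T i x0) \<le> real n"
        using i x0 by (auto simp: E_def)
      moreover have "a * norm (T i x) = norm (T i (x0 + a *\<^sub>R x) - T i x0)"
        using a by (simp add: L.add L.scale)
      ultimately have "a * norm (T i x) \<le> 2 * real n"
        using norm_triangle_ineq4[of "T i (x0 + a *\<^sub>R x)" "T i x0"] by linarith
      then show ?thesis using False r unfolding a_def by (simp add: field_simps)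
    qed (simp add: L.zero)
  qed
qed

lemma strongly_continuous_on_compact_uniformly_bounded:
  fixes M :: "'s::topological_space \<Rightarrow> 'a::{real_normed_vector,complete_space} \<Rightarrow> 'b::real_normed_vector"
  assumes "compact S" "\<And>s. s \<in> S \<Longrightarrow> bounded_linear (M s)" "\<And>x. continuous_on S (\<lambda>s. M s x)"
  shows "\<exists>K. \<forall>s\<in>S. \<forall>x. norm (M s x) \<le> K * norm x"
proof (rule banach_steinhaus)
  fix x
  have "bounded ((\<lambda>s. M s x) ` S)"
    by (intro compact_imp_bounded compact_continuous_image assms)
  then show "\<exists>c. \<forall>s\<in>S. norm (M s x) \<le> c"
    by (simp add: bounded_iff)
qed (rule assms(2))

lemma has_vector_derivative_zero_if_dominated:
  fixes f :: "real \<Rightarrow> 'b::real_normed_vector" and e :: "real \<Rightarrow> 'a::real_normed_vector"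
  assumes e_deriv: "(e has_vector_derivative 0) (at t within S)" and "e t = 0" "f t = 0"
    and dominated: "\<And>s. s \<in> S \<Longrightarrow> norm (f s) \<le> K * norm (e s)"
  shows "(f has_vector_derivative 0) (at t within S)"
proof -
  have "((\<lambda>s. (1 / norm (s - t)) *\<^sub>R e s) \<longlongrightarrow> 0) (at t within S)"
    using e_deriv \<open>e t = 0\<close> by (simp add: has_vector_derivative_def has_derivative_within)
  then have lim: "((\<lambda>s. K * norm ((1 / norm (s - t)) *\<^sub>R e s)) \<longlongrightarrow> 0) (at t within S)"
    by (intro tendsto_mult_right_zero tendsto_norm_zero)
  have "\<forall>\<^sub>F s in at t within S.
      norm ((1 / norm (s - t)) *\<^sub>R f s) \<le> K * norm ((1 / norm (s - t)) *\<^sub>R e s)"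
    using dominated by (auto simp: eventually_at_filter intro!: always_eventually divide_right_mono)
  from Lim_null_comparison[OF this lim] show ?thesis
    using \<open>f t = 0\<close> by (simp add: has_vector_derivative_def has_derivative_within)
qed

text \<open>Splitting off the first-order Taylor remainder \<open>e\<close> of \<open>v\<close>: its image under the uniformly
  bounded \<open>M s\<close> is still \<open>o(s - t)\<close>, while the other two pieces are differentiable.\<close>
lemma has_vector_derivative_apply_family:
  fixes M :: "real \<Rightarrow> 'a::real_normed_vector \<Rightarrow> 'b::real_normed_vector"
  assumes bound: "\<forall>s\<in>S. \<forall>x. norm (M s x) \<le> K * norm x"
    and lin: "\<forall>s\<in>S. bounded_linear (M s)"
    and M_deriv: "\<And>x. ((\<lambda>s. M s x) has_vector_derivative M' x) (at t within S)"
    and v_deriv: "(v has_vector_derivative v') (at t within S)"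
    and "t \<in> S"
  shows "((\<lambda>s. M s (v s)) has_vector_derivative (M t v' + M' (v t))) (at t within S)"
proof -
  define e where "e s = v s - (v t + (s - t) *\<^sub>R v')" for s
  have split: "M s (v s) = M s (e s) + (s - t) *\<^sub>R M s v' + M s (v t)" if "s \<in> S" for s
  proof -
    interpret bounded_linear "M s" using lin that by blast
    show ?thesis by (simp add: e_def diff add scale)
  qed
  have "((\<lambda>s. s - t) has_real_derivative 1) (at t within S)"
    by (rule derivative_eq_intros refl | simp)+
  then have "(e has_vector_derivative v' - (0 + ((t - t) *\<^sub>R 0 + 1 *\<^sub>R v'))) (at t within S)"
    unfolding e_def
    by (intro has_vector_derivative_diff v_deriv has_vector_derivative_add
        has_vector_derivative_const has_vector_derivative_scaleR)
  then have e_deriv: "(e has_vector_derivative 0) (at t within S)" by simp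
  have "e t = 0" by (simp add: e_def)
  moreover have "M t (e t) = 0"
    using linear_0[OF bounded_linear.linear, of "M t"] lin \<open>t \<in> S\<close> \<open>e t = 0\<close> by simp
  ultimately have "((\<lambda>s. M s (e s)) has_vector_derivative 0) (at t within S)"
    using bound by (intro has_vector_derivative_zero_if_dominated[OF e_deriv, where K=K]) auto
  moreover have "((\<lambda>s. (s - t) *\<^sub>R M s v') has_vector_derivative (t - t) *\<^sub>R M' v' + 1 *\<^sub>R M t v') (at t within S)"
    by (intro has_vector_derivative_scaleR M_deriv \<open>((\<lambda>s. s - t) has_real_derivative 1) (at t within S)\<close>)
  ultimately have "((\<lambda>s. M s (e s) + (s - t) *\<^sub>R M s v' + M s (v t))
      has_vector_derivative (0 + ((t - t) *\<^sub>R M' v' + 1 *\<^sub>R M t v') + M' (v t))) (at t within S)"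
    by (intro has_vector_derivative_add M_deriv)
  then have "((\<lambda>s. M s (e s) + (s - t) *\<^sub>R M s v' + M s (v t))
      has_vector_derivative (M t v' + M' (v t))) (at t within S)"
    by simp
  then show ?thesis
    by (rule has_vector_derivative_transform_within[OF _ zero_less_one \<open>t \<in> S\<close>]) (simp add: split)
qed

text \<open>The uniform bound near \<open>t\<close> comes from the Banach--Steinhaus theorem, as strong
  differentiability makes \<open>M\<close> strongly continuous.\<close>
lemma has_vector_derivative_apply_family_atLeast:
  fixes M :: "real \<Rightarrow> 'a::{real_normed_vector,complete_space} \<Rightarrow> 'b::real_normed_vector"
  assumes lin: "\<forall>s\<ge>a. bounded_linear (M s)"
    and M_deriv: "\<forall>s\<ge>a. \<forall>x. ((\<lambda>s. M s x) has_vector_derivative M' s x) (at s within {a..})"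
    and v_deriv: "(v has_vector_derivative v') (at t within {a..})"
    and "a \<le> t"
  shows "((\<lambda>s. M s (v s)) has_vector_derivative (M t v' + M' t (v t))) (at t within {a..})"
proof -
  have at_eq: "at t within {a..t+1} = at t within {a..}"
    by (rule at_within_nhd[of _ "{..<t+1}"]) auto
  have "continuous (at s within {a..}) (\<lambda>s. M s x)" if "s \<ge> a" for s x
    using M_deriv that by (blast intro: has_vector_derivative_continuous)
  then have "continuous_on {a..} (\<lambda>s. M s x)" for x
    by (simp add: continuous_on_eq_continuous_within)
  then have "continuous_on {a..t+1} (\<lambda>s. M s x)" for x
    by (rule continuous_on_subset) auto
  then obtain K where "\<forall>s\<in>{a..t+1}. \<forall>x. norm (M s x) \<le> K * norm x"
    using strongly_continuous_on_compact_uniformly_bounded[of "{a..t+1}" M] lin by auto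
  moreover have "((\<lambda>s. M s x) has_vector_derivative M' t x) (at t within {a..t+1})" for x
    using M_deriv \<open>a \<le> t\<close> unfolding at_eq by blast
  moreover have "(v has_vector_derivative v') (at t within {a..t+1})"
    using v_deriv unfolding at_eq .
  ultimately have "((\<lambda>s. M s (v s)) has_vector_derivative (M t v' + M' t (v t))) (at t within {a..t+1})"
    using lin \<open>a \<le> t\<close> by (intro has_vector_derivative_apply_family) auto
  then show ?thesis
    unfolding at_eq .
qed

lemma set_integrable_imp_integrable_on_subinterval:
  fixes a :: "real \<Rightarrow> real"
  assumes "set_integrable lborel A a" "{T1..T2} \<subseteq> A"
  shows "a integrable_on {T1..T2}"
  using set_integrable_subset[OF assms(1) _ assms(2)] set_borel_integral_eq_integral(1) by simp

lemma integral_subinterval_le_set_integral: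
  fixes a :: "real \<Rightarrow> real"
  assumes "set_integrable lborel A a" "{T1..T2} \<subseteq> A" "\<And>t. t \<in> A \<Longrightarrow> 0 \<le> a t"
  shows "integral {T1..T2} a \<le> (LINT t:A|lborel. a t)"
  using integral_subset_le[OF assms(2) set_integrable_imp_integrable_on_subinterval[OF assms(1,2)]
      set_borel_integral_eq_integral(1)[OF assms(1)]] assms(3)
    set_borel_integral_eq_integral(2)[OF assms(1)]
  by simp

lemma eventually_integral_tail_less:
  fixes a :: "real \<Rightarrow> real"
  assumes "set_integrable lborel {0..} a" "\<delta> > 0"
  shows "\<forall>\<^sub>F T1 in at_top. \<forall>T2\<ge>T1. integral {T1..T2} a < \<delta>"
proof -
  define I where "I T = integral {0..T} a" for T
  have "((\<lambda>T. LINT t:{0..T}|lborel. a t) \<longlongrightarrow> (LINT t:{0..}|lborel. a t)) at_top"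
    by (rule tendsto_set_lebesgue_integral_at_top[OF _ assms(1)]) auto
  moreover have "(LINT t:{0..T}|lborel. a t) = I T" for T
    unfolding I_def by (rule set_borel_integral_eq_integral(2), rule set_integrable_subset[OF assms(1)]) auto
  ultimately have lim: "(I \<longlongrightarrow> (LINT t:{0..}|lborel. a t)) at_top" by simp
  have "\<forall>\<^sub>F T in at_top. dist (I T) (LINT t:{0..}|lborel. a t) < \<delta> / 2"
    using tendsto_iff[THEN iffD1, OF lim, rule_format, of "\<delta> / 2"] assms(2) by simp
  then obtain N where N: "\<And>T. T \<ge> N \<Longrightarrow> dist (I T) (LINT t:{0..}|lborel. a t) < \<delta> / 2"
    by (auto simp: eventually_at_top_linorder)
  have "integral {T1..T2} a < \<delta>" if "max N 0 \<le> T1" "T1 \<le> T2" for T1 T2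
  proof -
    have "a integrable_on {0..T2}"
      by (rule set_integrable_imp_integrable_on_subinterval[OF assms(1)]) auto
    then have "integral {0..T1} a + integral {T1..T2} a = integral {0..T2} a"
      using that by (intro Henstock_Kurzweil_Integration.integral_combine) auto
    moreover have "dist (I T1) (LINT t:{0..}|lborel. a t) < \<delta> / 2"
      "dist (I T2) (LINT t:{0..}|lborel. a t) < \<delta> / 2"
      using that N by auto
    ultimately show ?thesis by (simp add: I_def dist_real_def) (smt (verit))
  qed
  then show ?thesis
    unfolding eventually_at_top_linorder by (intro exI[of _ "max N 0"]) auto
qed

lemma norm_has_integral_le_weighted_squares:
  fixes g :: "real \<Rightarrow> 'b::banach"
  assumes g: "(g has_integral I) S"
    and int: "(\<lambda>t. (x t)\<^sup>2) integrable_on S" "(\<lambda>t. (y t)\<^sup>2) integrable_on S" "q integrable_on S"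
    and bound: "\<And>t. t \<in> S \<Longrightarrow> norm (g t) \<le> x t * y t + q t"
    and "lam > 0"
  shows "norm I \<le> lam / 2 * integral S (\<lambda>t. (x t)\<^sup>2) + integral S (\<lambda>t. (y t)\<^sup>2) / (2 * lam)
    + integral S q"
proof -
  define h where "h t = lam / 2 * (x t)\<^sup>2 + (y t)\<^sup>2 / (2 * lam) + q t" for t
  have "x t * y t \<le> lam / 2 * (x t)\<^sup>2 + (y t)\<^sup>2 / (2 * lam)" for t
  proof -
    have "0 \<le> (lam * x t - y t)\<^sup>2 / (2 * lam)" using \<open>lam > 0\<close> by simp
    also have "\<dots> = lam / 2 * (x t)\<^sup>2 + (y t)\<^sup>2 / (2 * lam) - x t * y t"
      using \<open>lam > 0\<close> by (simp add: field_simps power2_eq_square)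
    finally show ?thesis by simp
  qed
  then have h_bound: "norm (g t) \<le> h t" if "t \<in> S" for t
    using bound[OF that] unfolding h_def by (smt (verit))
  have h_int: "h integrable_on S" and "integral S h = lam / 2 * integral S (\<lambda>t. (x t)\<^sup>2)
      + integral S (\<lambda>t. (y t)\<^sup>2) / (2 * lam) + integral S q"
    using int unfolding h_def
    by (simp_all add: integral_add integrable_add integrable_on_mult_right integral_mult_right
        integrable_on_divide integral_divide)
  with Henstock_Kurzweil_Integration.integral_norm_bound_integral[OF has_integral_integrable[OF g] h_int h_bound]
  show ?thesis
    using integral_unique[OF g] by simp
qed

lemma convergent_at_top_if_Cauchy:
  fixes F :: "real \<Rightarrow> 'a::{complete_space, real_normed_vector}"
  assumes "\<And>e. e > 0 \<Longrightarrow> \<exists>N. \<forall>x y. N \<le> x \<longrightarrow> x \<le> y \<longrightarrow> norm (F y - F x) < e"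
  shows "\<exists>L. (F \<longlongrightarrow> L) at_top"
proof -
  have "cauchy_filter (filtermap F at_top)"
    unfolding cauchy_filter_metric_filtermap
  proof (intro allI impI)
    fix e :: real assume "e > 0"
    then obtain N where N: "\<forall>x y. N \<le> x \<longrightarrow> x \<le> y \<longrightarrow> norm (F y - F x) < e"
      using assms by blast
    have "dist (F x) (F y) < e" if "N \<le> x" "N \<le> y" for x y
      using N that linorder_le_cases[of x y] by (metis dist_commute dist_norm)
    then show "\<exists>P. eventually P at_top \<and> (\<forall>x y. P x \<and> P y \<longrightarrow> dist (F x) (F y) < e)"
      by (intro exI[of _ "\<lambda>x. N \<le> x"]) (auto simp: eventually_ge_at_top)
  qed
  moreover have "filtermap F at_top \<le> principal UNIV" "filtermap F at_top \<noteq> bot"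
    by (simp_all add: filtermap_bot_iff)
  ultimately obtain L where "filtermap F at_top \<le> nhds L"
    using cauchy_filter_complete_converges[OF _ complete_UNIV] by blast
  then show ?thesis
    unfolding filterlim_def by blast
qed

lemma norm_le_if_cinner_quadratic_bound_on_dense:
  fixes x :: "'a::complex_inner"
  assumes dense: "closure D = UNIV" and "0 \<le> \<gamma>"
    and bound: "\<And>\<phi>. \<phi> \<in> D \<Longrightarrow> cmod (cinner \<phi> x) \<le> \<alpha> * (norm \<phi>)\<^sup>2 + \<beta> + norm \<phi> * \<gamma>"
  shows "norm x \<le> 8 * \<bar>\<alpha>\<bar> + 2 * \<beta> + 4 * \<gamma>"
proof -
  have "norm x \<le> 2 * (4 * \<bar>\<alpha>\<bar> + \<beta> + 2 * \<gamma>)"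
  proof (rule norm_le_if_cinner_bounded_on_dense[OF dense])
    fix \<phi> :: 'a assume "\<phi> \<in> D" "norm \<phi> \<le> 2"
    have "\<alpha> * (norm \<phi>)\<^sup>2 \<le> \<bar>\<alpha>\<bar> * (norm \<phi>)\<^sup>2"
      by (intro mult_right_mono) auto
    also have "\<dots> \<le> \<bar>\<alpha>\<bar> * 4"
      using power_mono[OF \<open>norm \<phi> \<le> 2\<close>, of 2] by (intro mult_left_mono) auto
    finally have "\<alpha> * (norm \<phi>)\<^sup>2 \<le> \<bar>\<alpha>\<bar> * 4" .
    moreover have "norm \<phi> * \<gamma> \<le> 2 * \<gamma>"
      using \<open>norm \<phi> \<le> 2\<close> \<open>0 \<le> \<gamma>\<close> by (rule mult_right_mono)
    ultimately show "cmod (cinner \<phi> x) \<le> 4 * \<bar>\<alpha>\<bar> + \<beta> + 2 * \<gamma>"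
      using bound[OF \<open>\<phi> \<in> D\<close>] by simp
  qed
  then show ?thesis by simp
qed

lemma convergent_at_top_if_weak_increments_bounded:
  fixes F :: "real \<Rightarrow> 'a::{complex_inner,complete_space}"
  assumes dense: "closure D = UNIV"
    and b_int: "set_integrable lborel {0..} b"
    and q_int: "set_integrable lborel {0..} q" and q_nonneg: "\<And>t. 0 \<le> q t"
    and increment: "\<And>\<phi> lam T1 T2. \<phi> \<in> D \<Longrightarrow> lam > 0 \<Longrightarrow> 0 \<le> T1 \<Longrightarrow> T1 \<le> T2 \<Longrightarrow>
      cmod (cinner \<phi> (F T2 - F T1))
        \<le> lam / 2 * C * (norm \<phi>)\<^sup>2 + integral {T1..T2} b / (2 * lam) + norm \<phi> * integral {T1..T2} q"
  shows "\<exists>L. (F \<longlongrightarrow> L) at_top"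
proof (rule convergent_at_top_if_Cauchy)
  fix e :: real assume "e > 0"
  define lam where "lam = e / (16 * (\<bar>C\<bar> + 1))"
  have "lam > 0" using \<open>e > 0\<close> by (simp add: lam_def add_pos_nonneg)
  have "8 * \<bar>lam / 2 * C\<bar> = e / 4 * (\<bar>C\<bar> / (\<bar>C\<bar> + 1))"
    using \<open>lam > 0\<close> by (simp add: lam_def abs_mult field_simps)
  also have "\<dots> \<le> e / 4"
    using \<open>e > 0\<close> by (intro mult_left_le) auto
  finally have C_term: "8 * \<bar>lam / 2 * C\<bar> \<le> e / 4" .
  have "\<forall>\<^sub>F T1 in at_top. \<forall>T2\<ge>T1. integral {T1..T2} b < e * lam / 4"
    using \<open>e > 0\<close> \<open>lam > 0\<close> by (intro eventually_integral_tail_less[OF b_int]) simp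
  moreover have "\<forall>\<^sub>F T1 in at_top. \<forall>T2\<ge>T1. integral {T1..T2} q < e / 16"
    using \<open>e > 0\<close> by (intro eventually_integral_tail_less[OF q_int]) simp
  ultimately obtain N where N: "\<And>T1 T2. N \<le> T1 \<Longrightarrow> T1 \<le> T2 \<Longrightarrow>
      integral {T1..T2} b < e * lam / 4 \<and> integral {T1..T2} q < e / 16"
    unfolding eventually_at_top_linorder by (metis order.trans nle_le)
  have "norm (F T2 - F T1) < e" if "max N 0 \<le> T1" "T1 \<le> T2" for T1 T2
  proof -
    have "0 \<le> integral {T1..T2} q"
      using q_nonneg that set_integrable_imp_integrable_on_subinterval[OF q_int, of T1 T2]
      by (intro integral_nonneg) auto
    then have "norm (F T2 - F T1) \<le> 8 * \<bar>lam / 2 * C\<bar> + 2 * (integral {T1..T2} b / (2 * lam))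
        + 4 * integral {T1..T2} q"
      using \<open>lam > 0\<close> that
      by (intro norm_le_if_cinner_quadratic_bound_on_dense[OF dense] increment) auto
    moreover have "2 * (integral {T1..T2} b / (2 * lam)) < e / 4"
      using N[of T1 T2] that \<open>lam > 0\<close> by (simp add: field_simps)
    moreover have "4 * integral {T1..T2} q < e / 4"
      using N[of T1 T2] that by simp
    ultimately show ?thesis using C_term by linarith
  qed
  then show "\<exists>N. \<forall>x y. N \<le> x \<longrightarrow> x \<le> y \<longrightarrow> norm (F y - F x) < e"
    by blast
qed

locale heisenberg_evolution =
  fixes D :: "'a::{complex_inner,complete_space} set"
    and H :: "'a \<Rightarrow> 'a"
    and U :: "real \<Rightarrow> 'a \<Rightarrow> 'a"
    and u u' :: "real \<Rightarrow> 'a"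
    and M M' DM :: "real \<Rightarrow> 'a \<Rightarrow> 'a"
  assumes dense: "closure D = UNIV"
    and U_grp: "unitary_group_of D H U"
    and u_deriv: "\<forall>t\<ge>0. (u has_vector_derivative u' t) (at t within {0..})"
    and u_dom: "\<forall>t\<ge>0. u t \<in> D"
    and M_bdd: "\<forall>t\<ge>0. cbounded_linear (M t)"
    and M_deriv: "\<forall>t\<ge>0. \<forall>x. ((\<lambda>s. M s x) has_vector_derivative M' t x) (at t within {0..})"
    and DM_heis: "\<forall>t\<ge>0. \<forall>\<phi>\<in>D. \<forall>\<psi>\<in>D.
        cinner \<phi> (DM t \<psi>) = cinner \<phi> (M' t \<psi>)
          + cinner (H \<phi>) (\<i> *\<^sub>C M t \<psi>) - cinner \<phi> (\<i> *\<^sub>C M t (H \<psi>))"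
begin

lemma has_vector_derivative_cinner_evolution:
  assumes "\<phi> \<in> D" "t \<ge> 0"
  shows "((\<lambda>s. cinner (U s \<phi>) (M s (u s))) has_vector_derivative
      cinner (U t \<phi>) (DM t (u t)) + cinner (U t \<phi>) (M t (u' t + \<i> *\<^sub>C H (u t)))) (at t within {0..})"
proof -
  have "((\<lambda>s. U s \<phi>) has_vector_derivative (- \<i>) *\<^sub>C H (U t \<phi>)) (at t within {0..})"
    using unitary_group_of_has_vector_derivative[OF U_grp \<open>\<phi> \<in> D\<close>]
    by (rule has_vector_derivative_at_within)
  moreover have "((\<lambda>s. M s (u s)) has_vector_derivative M t (u' t) + M' t (u t)) (at t within {0..})"
    using M_bdd M_deriv u_deriv \<open>t \<ge> 0\<close>
    by (intro has_vector_derivative_apply_family_atLeast) (auto simp: cbounded_linear_imp_bounded_linear)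
  ultimately have "((\<lambda>s. cinner (U s \<phi>) (M s (u s))) has_vector_derivative
      cinner (U t \<phi>) (M t (u' t) + M' t (u t)) + cinner ((- \<i>) *\<^sub>C H (U t \<phi>)) (M t (u t)))
      (at t within {0..})"
    by (rule bounded_bilinear.has_vector_derivative[OF bounded_bilinear_cinner])
  moreover have "cinner (U t \<phi>) (M t (u' t) + M' t (u t)) + cinner ((- \<i>) *\<^sub>C H (U t \<phi>)) (M t (u t))
      = cinner (U t \<phi>) (DM t (u t)) + cinner (U t \<phi>) (M t (u' t + \<i> *\<^sub>C H (u t)))"
  proof -
    have "M t (u' t + \<i> *\<^sub>C H (u t)) = M t (u' t) + \<i> *\<^sub>C M t (H (u t))"
      using M_bdd \<open>t \<ge> 0\<close> unfolding cbounded_linear_def by auto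
    moreover have "cinner (U t \<phi>) (DM t (u t)) = cinner (U t \<phi>) (M' t (u t))
        + cinner (H (U t \<phi>)) (\<i> *\<^sub>C M t (u t)) - cinner (U t \<phi>) (\<i> *\<^sub>C M t (H (u t)))"
      using DM_heis \<open>t \<ge> 0\<close> unitary_group_of_domain[OF U_grp \<open>\<phi> \<in> D\<close>] u_dom by blast
    ultimately show ?thesis
      by (simp add: cinner_add_right cinner_diff_right cinner_scaleC_left cinner_scaleC_right
          algebra_simps)
  qed
  ultimately show ?thesis by simp
qed

lemma has_integral_cinner_evolution:
  assumes "\<phi> \<in> D" "0 \<le> T1" "T1 \<le> T2"
  shows "((\<lambda>t. cinner (U t \<phi>) (DM t (u t)) + cinner (U t \<phi>) (M t (u' t + \<i> *\<^sub>C H (u t))))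
    has_integral cinner \<phi> (U (- T2) (M T2 (u T2)) - U (- T1) (M T1 (u T1)))) {T1..T2}"
proof -
  define f where "f s = cinner (U s \<phi>) (M s (u s))" for s
  have "f T2 - f T1 = cinner \<phi> (U (- T2) (M T2 (u T2)) - U (- T1) (M T1 (u T1)))"
    unfolding f_def by (simp add: unitary_group_of_adjoint[OF U_grp] cinner_diff_right)
  moreover have "((\<lambda>t. cinner (U t \<phi>) (DM t (u t)) + cinner (U t \<phi>) (M t (u' t + \<i> *\<^sub>C H (u t))))
      has_integral f T2 - f T1) {T1..T2}"
  proof (rule fundamental_theorem_of_calculus[OF \<open>T1 \<le> T2\<close>])
    fix t assume "t \<in> {T1..T2}"
    then show "(f has_vector_derivative
        cinner (U t \<phi>) (DM t (u t)) + cinner (U t \<phi>) (M t (u' t + \<i> *\<^sub>C H (u t))))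
        (at t within {T1..T2})"
      using has_vector_derivative_cinner_evolution[OF \<open>\<phi> \<in> D\<close>, of t] \<open>0 \<le> T1\<close>
      unfolding f_def by (auto intro: has_vector_derivative_within_subset)
  qed
  ultimately show ?thesis by simp
qed

lemma cinner_evolution_increment_le:
  fixes B B' :: "real \<Rightarrow> 'a \<Rightarrow> 'a"
  assumes M_r_int: "set_integrable lborel {0..} (\<lambda>t. norm (M t (u' t + \<i> *\<^sub>C H (u t))))"
    and DM_factor: "\<forall>t\<ge>0. \<forall>u1. cmod (cinner u1 (DM t (u t))) \<le> norm (B' t u1) * norm (B t (u t))"
    and B_u_int: "set_integrable lborel {0..} (\<lambda>t. (norm (B t (u t)))\<^sup>2)"
    and B'_int: "set_integrable lborel {0..} (\<lambda>t. (norm (B' t (U t \<phi>)))\<^sup>2)"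
    and B'_le: "(LINT t:{0..}|lborel. (norm (B' t (U t \<phi>)))\<^sup>2) \<le> C * (norm \<phi>)\<^sup>2"
    and "\<phi> \<in> D" "lam > 0" "0 \<le> T1" "T1 \<le> T2"
  shows "cmod (cinner \<phi> (U (- T2) (M T2 (u T2)) - U (- T1) (M T1 (u T1))))
    \<le> lam / 2 * C * (norm \<phi>)\<^sup>2 + integral {T1..T2} (\<lambda>t. (norm (B t (u t)))\<^sup>2) / (2 * lam)
      + norm \<phi> * integral {T1..T2} (\<lambda>t. norm (M t (u' t + \<i> *\<^sub>C H (u t))))"
proof -
  define g where "g t = cinner (U t \<phi>) (DM t (u t)) + cinner (U t \<phi>) (M t (u' t + \<i> *\<^sub>C H (u t)))" for t
  have sub: "{T1..T2} \<subseteq> {0..}" using \<open>0 \<le> T1\<close> by auto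
  have "(g has_integral cinner \<phi> (U (- T2) (M T2 (u T2)) - U (- T1) (M T1 (u T1)))) {T1..T2}"
    unfolding g_def using assms by (intro has_integral_cinner_evolution)
  moreover have "cmod (g t) \<le> norm (B' t (U t \<phi>)) * norm (B t (u t)) + norm \<phi> * norm (M t (u' t + \<i> *\<^sub>C H (u t)))"
    if "t \<in> {T1..T2}" for t
  proof -
    have "cmod (cinner (U t \<phi>) (DM t (u t))) \<le> norm (B' t (U t \<phi>)) * norm (B t (u t))"
      using DM_factor that sub by auto
    moreover have "cmod (cinner (U t \<phi>) (M t (u' t + \<i> *\<^sub>C H (u t)))) \<le> norm \<phi> * norm (M t (u' t + \<i> *\<^sub>C H (u t)))"
      using cinner_cauchy_schwarz[of "U t \<phi>"] by (simp add: unitary_group_of_norm[OF U_grp])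
    ultimately show ?thesis
      unfolding g_def by (smt (verit) norm_triangle_ineq)
  qed
  ultimately have "cmod (cinner \<phi> (U (- T2) (M T2 (u T2)) - U (- T1) (M T1 (u T1))))
      \<le> lam / 2 * integral {T1..T2} (\<lambda>t. (norm (B' t (U t \<phi>)))\<^sup>2)
        + integral {T1..T2} (\<lambda>t. (norm (B t (u t)))\<^sup>2) / (2 * lam)
        + integral {T1..T2} (\<lambda>t. norm \<phi> * norm (M t (u' t + \<i> *\<^sub>C H (u t))))"
    using set_integrable_imp_integrable_on_subinterval[OF B'_int sub]
      set_integrable_imp_integrable_on_subinterval[OF B_u_int sub]
      integrable_on_mult_right[OF set_integrable_imp_integrable_on_subinterval[OF M_r_int sub]]
      \<open>lam > 0\<close>
    by (intro norm_has_integral_le_weighted_squares) auto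
  moreover have "integral {T1..T2} (\<lambda>t. (norm (B' t (U t \<phi>)))\<^sup>2) \<le> C * (norm \<phi>)\<^sup>2"
    using integral_subinterval_le_set_integral[OF B'_int sub] B'_le by force
  then have "lam / 2 * integral {T1..T2} (\<lambda>t. (norm (B' t (U t \<phi>)))\<^sup>2) \<le> lam / 2 * C * (norm \<phi>)\<^sup>2"
    using mult_left_mono[of _ _ "lam / 2"] \<open>lam > 0\<close> by (simp add: mult.assoc)
  ultimately show ?thesis
    by simp
qed

end

theorem lemmaA3:
  fixes D :: "'a::{complex_inner, complete_space} set"
    and H :: "'a \<Rightarrow> 'a"
    and U :: "real \<Rightarrow> 'a \<Rightarrow> 'a"
    and u u' :: "real \<Rightarrow> 'a"
    and M M' DM B B1 :: "real \<Rightarrow> 'a \<Rightarrow> 'a"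
    and C :: real
  assumes H_sa: "self_adjoint D H"
    and U_grp: "unitary_group_of D H U"
    and u_bdd: "bounded (u ` {0..})"
    and u_C1: "\<forall>t\<ge>0. (u has_vector_derivative u' t) (at t within {0..})"
    and u'_cont: "continuous_on {0..} u'"
    and u_dom: "\<forall>t\<ge>0. u t \<in> D"
    and u_C0_dom: "continuous_on {0..} u" "continuous_on {0..} (\<lambda>t. H (u t))"
    and M_bdd: "\<forall>t\<ge>0. cbounded_linear (M t)"
    and M'_bdd: "\<forall>t\<ge>0. cbounded_linear (M' t)"
    and M_deriv: "\<forall>t\<ge>0. \<forall>x. ((\<lambda>s. M s x) has_vector_derivative M' t x) (at t within {0..})"
    and DM_bdd: "\<forall>t\<ge>0. cbounded_linear (DM t)"
    and DM_heis: "\<forall>t\<ge>0. \<forall>\<phi>\<in>D. \<forall>\<psi>\<in>D.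
        cinner \<phi> (DM t \<psi>) = cinner \<phi> (M' t \<psi>)
          + cinner (H \<phi>) (\<i> *\<^sub>C M t \<psi>) - cinner \<phi> (\<i> *\<^sub>C M t (H \<psi>))"
    and hyp_i: "set_integrable lborel {0..} (\<lambda>t. norm (M t (u' t + \<i> *\<^sub>C H (u t))))"
    and B_bdd: "\<forall>t\<ge>0. cbounded_linear (B t) \<and> cbounded_linear (B1 t)"
    and hyp_ii: "\<forall>t\<ge>0. \<forall>u1. cmod (cinner u1 (DM t (u t))) \<le> norm (B1 t u1) * norm (B t (u t))"
    and hyp_iii_a: "set_integrable lborel {0..} (\<lambda>t. (norm (B t (u t)))\<^sup>2)"
    and hyp_iii_b: "\<forall>u1. set_integrable lborel {0..} (\<lambda>t. (norm (B1 t (U t u1)))\<^sup>2) \<and>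
        (LINT t:{0..}|lborel. (norm (B1 t (U t u1)))\<^sup>2) \<le> C * (norm u1)\<^sup>2"
  shows "\<exists>L. ((\<lambda>t. U (- t) (M t (u t))) \<longlongrightarrow> L) at_top"
proof -
  interpret heisenberg_evolution D H U u u' M M' DM
    using H_sa U_grp u_C1 u_dom M_bdd M_deriv DM_heis
    by unfold_locales (simp_all add: self_adjoint_def)
  have "cmod (cinner \<phi> (U (- T2) (M T2 (u T2)) - U (- T1) (M T1 (u T1))))
      \<le> lam / 2 * C * (norm \<phi>)\<^sup>2 + integral {T1..T2} (\<lambda>t. (norm (B t (u t)))\<^sup>2) / (2 * lam)
        + norm \<phi> * integral {T1..T2} (\<lambda>t. norm (M t (u' t + \<i> *\<^sub>C H (u t))))"
    if "\<phi> \<in> D" "lam > 0" "0 \<le> T1" "T1 \<le> T2" for \<phi> lam T1 T2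
    using hyp_iii_b that by (intro cinner_evolution_increment_le[where B=B and B'=B1, OF hyp_i hyp_ii hyp_iii_a]) auto
  then show ?thesis
    by (rule convergent_at_top_if_weak_increments_bounded[OF dense hyp_iii_a hyp_i norm_ge_zero])
qed

end
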